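(* Let $q>1$ and let $\rho$ be a positive $2\pi$-periodic $C^2$ function with $(\ln\rho)''(t)<\sqrt{q}/(1+\sqrt{q})$ for all $t$; let $y(\theta)=\rho(\theta)(\cos\theta,\sin\theta)^T$, and let $\phi$ be a continuous function on $\mathbb{S}^1$. With the notation in the context, suppose there is a sequence of positive numbers $k_n\to\infty$ such that for every $\eta\in\mathbb{S}^1$ and every integer $N\ge0$, $$\sum_{j,l=1}^2\big(f_\eta^{j,l}\big)^N\frac{\phi(\mathcal{T}_{j,l}\eta+\delta_{l,2}\pi)\,\Psi_\eta^{j,l}}{|\det D^2\psi_\eta^{j,l}|^{1/2}}\,e^{\mathrm{i}\pi\frac{(-1)^l(1-(-1)^j)}{4}+\mathrm{i}k_n\psi_\eta^{j,l}}\longrightarrow0\quad(n\to\infty).$$ Then for every $\eta\in\mathbb{S}^1$, the set $\Lambda=\Lambda_\eta=\{(j,l)\in\{1,2\}^2:\phi(\mathcal{T}_{j,l}\eta+\delta_{l,2}\pi)\neq0\}$ satisfies $\#\Lambda\in\{0,2,3,4\}$, and moreover: if $\#\Lambda\in\{2,3\}$, then $f_\eta^{j,l}$ takes the same value for all $(j,l)\in\Lambda$; if $\#\Lambda=4$, then either $f_\eta^{j,l}$ takes the same value for all $(j,l)\in\Lambda$, or $\Lambda=\Lambda_1\cup\Lambda_2$ with $\#\Lambda_1=\#\Lambda_2=2$, $f_\eta^{j,l}$ constant on each $\Lambda_p$, and for each $p=1,2$ and every integer $N\ge0$ the sum above restricted to $(j,l)\in\Lambda_p$ tends to $0$ as 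$n\to\infty$.
   Context: Identify $\mathbb{S}^1$ with $\mathbb{R}/(2\pi\mathbb{Z})$ via $\theta\mapsto(\cos\theta,\sin\theta)^T$; $\theta_\eta$ is the angle of $\eta$, and $x^\perp=(-x_2,x_1)^T$. For $\eta\in\mathbb{S}^1$ and $\xi=(\cos\theta_\xi,\sin\theta_\xi)$: $\psi_\eta(\theta,\theta_\xi)=(\sqrt{q}\eta+\xi)\cdot y(\theta)$, $\Psi_\eta(\theta,\theta_\xi)=-(\sqrt{q}\eta-\xi)\cdot y'(\theta)^\perp$, and $D^2\psi_\eta(\theta,\theta_\xi)=\begin{bmatrix}(\sqrt{q}\eta+\xi)\cdot y''(\theta)&\xi^\perp\cdot y'(\theta)\\ \xi^\perp\cdot y'(\theta)&-\xi\cdot y(\theta)\end{bmatrix}$. For $l\in\{1,2\}$ let $\eta_l=(-1)^{l-1}\eta$, $\theta_q=\arccos(1/\sqrt q)$, $h(\theta)=\frac{\sqrt q\sin\theta}{\sqrt q\cos\theta+1}$; the equation $(\ln\rho)'(\theta)=h(\theta-\theta_{\eta_l})$ has exactly two solutions in $\mathbb{R}/(2\pi\mathbb{Z})$: $\mathcal{T}_{1,l}\eta$ with $\theta-\theta_{\eta_l}\in(\theta_q-\pi,\pi-\theta_q)$ and $\mathcal{T}_{2,l}\eta$ with $\theta-\theta_{\eta_l}\in(\pi-\theta_q,\pi+\theta_q)$ (mod $2\pi$). Set $\{\Psi_\eta^{j,l},\psi_\eta^{j,l},D^2\psi_\eta^{j,l}\}=\{\Psi_\eta,\psi_\eta,D^2\psi_\eta\}(\mathcal{T}_{j,l}\eta,\mathcal{T}_{j,l}\eta+\delta_{l,2}\pi)$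 (these determinants are nonzero) and $f_\eta^{j,l}=\rho(\mathcal{T}_{j,l}\eta)\sin(\mathcal{T}_{j,l}\eta-\theta_\eta)$; $\delta_{l,2}$ is the Kronecker delta and $\phi$ is viewed as a function of the angle. *)

theory Defs
  imports "HOL-Analysis.Analysis"
begin

text \<open>Points of the unit circle are parametrised by their angle; vectors of R^2 are
  represented as elements of real \<times> real (with the standard inner product).\<close>

definition uvec :: "real \<Rightarrow> real \<times> real" where
  "uvec t = (cos t, sin t)"

definition perp :: "real \<times> real \<Rightarrow> real \<times> real" where
  "perp x = (- snd x, fst x)"

definition ycurve :: "(real \<Rightarrow> real) \<Rightarrow> real \<Rightarrow> real \<times> real" where
  "ycurve \<rho> \<theta> = (\<rho> \<theta> * cos \<theta>, \<rho> \<theta> * sin \<theta>)"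

definition ycurve' :: "(real \<Rightarrow> real) \<Rightarrow> real \<Rightarrow> real \<times> real" where
  "ycurve' \<rho> \<theta> = vector_derivative (ycurve \<rho>) (at \<theta>)"

definition ycurve'' :: "(real \<Rightarrow> real) \<Rightarrow> real \<Rightarrow> real \<times> real" where
  "ycurve'' \<rho> \<theta> = vector_derivative (ycurve' \<rho>) (at \<theta>)"

text \<open>psi_eta(theta, theta_xi), Psi_eta(theta, theta_xi), det D^2 psi_eta(theta, theta_xi);
  the direction eta is given by its angle te.\<close>

definition psi :: "real \<Rightarrow> (real \<Rightarrow> real) \<Rightarrow> real \<Rightarrow> real \<Rightarrow> real \<Rightarrow> real" where
  "psi q \<rho> te \<theta> t\<xi> = (sqrt q *\<^sub>R uvec te + uvec t\<xi>) \<bullet> ycurve \<rho> \<theta>"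

definition Psi :: "real \<Rightarrow> (real \<Rightarrow> real) \<Rightarrow> real \<Rightarrow> real \<Rightarrow> real \<Rightarrow> real" where
  "Psi q \<rho> te \<theta> t\<xi> = - ((sqrt q *\<^sub>R uvec te - uvec t\<xi>) \<bullet> perp (ycurve' \<rho> \<theta>))"

definition detD2psi :: "real \<Rightarrow> (real \<Rightarrow> real) \<Rightarrow> real \<Rightarrow> real \<Rightarrow> real \<Rightarrow> real" where
  "detD2psi q \<rho> te \<theta> t\<xi> =
     ((sqrt q *\<^sub>R uvec te + uvec t\<xi>) \<bullet> ycurve'' \<rho> \<theta>) * (- (uvec t\<xi> \<bullet> ycurve \<rho> \<theta>))
     - (perp (uvec t\<xi>) \<bullet> ycurve' \<rho> \<theta>) ^ 2"

definition theta_q :: "real \<Rightarrow> real" where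
  "theta_q q = arccos (1 / sqrt q)"

definition hfun :: "real \<Rightarrow> real \<Rightarrow> real" where
  "hfun q \<theta> = sqrt q * sin \<theta> / (sqrt q * cos \<theta> + 1)"

text \<open>Angle of eta_l = (-1)^(l-1) eta, for l in {1,2}.\<close>

definition ang_l :: "real \<Rightarrow> nat \<Rightarrow> real" where
  "ang_l te l = te + (if l = 2 then pi else 0)"

text \<open>T_{j,l} eta: the solution of (ln rho)'(theta) = h(theta - theta_{eta_l}), taken
  as the representative with theta - theta_{eta_l} in (theta_q - pi, pi - theta_q) for j = 1,
  and in (pi - theta_q, pi + theta_q) for j = 2.  All quantities below are 2 pi periodic in
  the angle, so the choice of representative is immaterial.\<close>

definition Tmap :: "real \<Rightarrow> (real \<Rightarrow> real) \<Rightarrow> real \<Rightarrow> nat \<Rightarrow> nat \<Rightarrow> real" where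
  "Tmap q \<rho> te j l =
     (THE \<theta>. (if j = 1 then \<theta> - ang_l te l \<in> {theta_q q - pi <..< pi - theta_q q}
              else \<theta> - ang_l te l \<in> {pi - theta_q q <..< pi + theta_q q})
           \<and> deriv (\<lambda>t. ln (\<rho> t)) \<theta> = hfun q (\<theta> - ang_l te l))"

definition delta2 :: "nat \<Rightarrow> real" where
  "delta2 l = (if l = 2 then 1 else 0)"

definition fval :: "real \<Rightarrow> (real \<Rightarrow> real) \<Rightarrow> real \<Rightarrow> nat \<Rightarrow> nat \<Rightarrow> real" where
  "fval q \<rho> te j l = \<rho> (Tmap q \<rho> te j l) * sin (Tmap q \<rho> te j l - te)"

definition summand ::
  "real \<Rightarrow> (real \<Rightarrow> real) \<Rightarrow> (real \<Rightarrow> complex) \<Rightarrow> real \<Rightarrow> nat \<Rightarrow> real \<Rightarrow> nat \<Rightarrow> nat \<Rightarrow> complex" where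
  "summand q \<rho> \<phi> te N kn j l =
     (let T = Tmap q \<rho> te j l; T' = T + delta2 l * pi in
      complex_of_real (fval q \<rho> te j l ^ N)
      * \<phi> T' * complex_of_real (Psi q \<rho> te T T')
      / complex_of_real (sqrt \<bar>detD2psi q \<rho> te T T'\<bar>)
      * exp (\<i> * complex_of_real (pi * (-1) ^ l * (1 - (-1) ^ j) / 4 + kn * psi q \<rho> te T T')))"

definition Lambda :: "real \<Rightarrow> (real \<Rightarrow> real) \<Rightarrow> (real \<Rightarrow> complex) \<Rightarrow> real \<Rightarrow> (nat \<times> nat) set" where
  "Lambda q \<rho> \<phi> te =
     {(j, l). j \<in> {1, 2} \<and> l \<in> {1, 2} \<and> \<phi> (Tmap q \<rho> te j l + delta2 l * pi) \<noteq> 0}"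

end

theory Submission
  imports Defs
begin

(* For fixed eta the (j,l) summand is (f^{j,l})^N times a factor B_{j,l}(n) of constant modulus
   |phi| |Psi| / |det D^2 psi|^(1/2). The bound on (ln rho)'' makes (ln rho)' - h strictly
   decreasing between consecutive poles of h, so T_{j,l} eta is well defined; together with the
   stationarity equation (ln rho)' = h it also keeps Psi and det D^2 psi away from zero there.
   Hence B_{j,l} vanishes off Lambda and does not tend to 0 on Lambda. Since the sums of
   (f^{j,l})^N B_{j,l}(n) tend to 0 for every N, Lagrange interpolation in the values of f shows
   that the sum of B over each level set of f tends to 0. So no level set of f on Lambda is a
   singleton, and with at most four indices only the listed patterns remain. *)

lemma tendsto_level_sum_zero:
  fixes f :: "'i \<Rightarrow> real" and A :: "'i \<Rightarrow> nat \<Rightarrow> 'a::real_normed_vector"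
  assumes fin: "finite I"
    and power_sums: "\<And>N. (\<lambda>n. \<Sum>i\<in>I. f i ^ N *\<^sub>R A i n) \<longlonglongrightarrow> 0"
  shows "(\<lambda>n. \<Sum>i\<in>{i\<in>I. f i = v}. A i n) \<longlonglongrightarrow> 0"
proof -
  have poly_sums: "(\<lambda>n. \<Sum>i\<in>I. (f i ^ N * (\<Prod>w\<in>W. f i - w)) *\<^sub>R A i n) \<longlonglongrightarrow> 0"
    if "finite W" for W N
    using that
  proof (induction W arbitrary: N rule: finite_induct)
    case empty
    then show ?case
      using power_sums by simp
  next
    case (insert w W)
    have step: "(\<Sum>i\<in>I. (f i ^ N * (\<Prod>x\<in>insert w W. f i - x)) *\<^sub>R A i n)
        = (\<Sum>i\<in>I. (f i ^ Suc N * (\<Prod>x\<in>W. f i - x)) *\<^sub>R A i n)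
          - w *\<^sub>R (\<Sum>i\<in>I. (f i ^ N * (\<Prod>x\<in>W. f i - x)) *\<^sub>R A i n)" for n
      using insert.hyps
      by (simp add: scaleR_sum_right sum_subtractf[symmetric] algebra_simps)
    have "(\<lambda>n. (\<Sum>i\<in>I. (f i ^ Suc N * (\<Prod>x\<in>W. f i - x)) *\<^sub>R A i n)
          - w *\<^sub>R (\<Sum>i\<in>I. (f i ^ N * (\<Prod>x\<in>W. f i - x)) *\<^sub>R A i n)) \<longlonglongrightarrow> 0 - w *\<^sub>R 0"
      by (intro tendsto_intros insert.IH)
    then show ?case
      unfolding step by simp
  qed
  \<comment> \<open>Lagrange interpolation: the polynomial vanishing at all other values of f
      isolates the level v.\<close>
  define W where "W = f ` I - {v}"
  define c where "c = (\<Prod>w\<in>W. v - w)"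
  have "finite W" "c \<noteq> 0"
    unfolding W_def c_def using fin by auto
  have "(\<Sum>i\<in>I. (f i ^ 0 * (\<Prod>w\<in>W. f i - w)) *\<^sub>R A i n) = c *\<^sub>R (\<Sum>i\<in>{i\<in>I. f i = v}. A i n)" for n
  proof -
    have "(\<Prod>w\<in>W. f i - w) = 0" if "i \<in> I" "f i \<noteq> v" for i
      using that \<open>finite W\<close> unfolding W_def by auto
    then have "(\<Sum>i\<in>I. (f i ^ 0 * (\<Prod>w\<in>W. f i - w)) *\<^sub>R A i n)
        = (\<Sum>i\<in>{i\<in>I. f i = v}. (f i ^ 0 * (\<Prod>w\<in>W. f i - w)) *\<^sub>R A i n)"
      using fin by (intro sum.mono_neutral_right) auto
    then show ?thesis
      unfolding c_def by (simp add: scaleR_sum_right)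
  qed
  then have "(\<lambda>n. c *\<^sub>R (\<Sum>i\<in>{i\<in>I. f i = v}. A i n)) \<longlonglongrightarrow> 0"
    using poly_sums[OF \<open>finite W\<close>, of 0] by simp
  from tendsto_scaleR[OF tendsto_const[of "inverse c"] this] show ?thesis
    using \<open>c \<noteq> 0\<close> by simp
qed

lemma two_level_sets_of_card_two:
  assumes fin: "finite L" and card_L: "card L \<le> 4"
    and partner: "\<And>i. i \<in> L \<Longrightarrow> \<exists>i'\<in>L. i' \<noteq> i \<and> f i' = f i"
    and i12: "i1 \<in> L" "i2 \<in> L" "f i1 \<noteq> f i2"
  shows "L = {i\<in>L. f i = f i1} \<union> {i\<in>L. f i = f i2}"
    and "card {i\<in>L. f i = f i1} = 2" and "card {i\<in>L. f i = f i2} = 2" and "card L = 4"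
proof -
  have level_card: "2 \<le> card {i\<in>L. f i = f i0}" if i0: "i0 \<in> L" for i0
  proof -
    obtain i' where "i' \<in> L" "i' \<noteq> i0" "f i' = f i0"
      using partner[OF i0] by blast
    then have "card {i0, i'} \<le> card {i\<in>L. f i = f i0}"
      using i0 fin by (intro card_mono) auto
    with \<open>i' \<noteq> i0\<close> show ?thesis
      by simp
  qed
  define A1 where "A1 = {i\<in>L. f i = f i1}"
  define A2 where "A2 = {i\<in>L. f i = f i2}"
  have "A1 \<inter> A2 = {}" and sub: "A1 \<union> A2 \<subseteq> L"
    unfolding A1_def A2_def using i12 by auto
  then have "card A1 + card A2 = card (A1 \<union> A2)" "card (A1 \<union> A2) \<le> card L"
    using fin card_mono[OF fin sub] by (auto simp: A1_def A2_def card_Un_disjoint)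
  moreover have "2 \<le> card A1" "2 \<le> card A2"
    unfolding A1_def A2_def using level_card i12 by auto
  ultimately have "card A1 = 2" "card A2 = 2" "card (A1 \<union> A2) = card L" "card L = 4"
    using card_L by linarith+
  then show "L = A1 \<union> A2" "card A1 = 2" "card A2 = 2" "card L = 4"
    using card_subset_eq[OF fin sub] by simp_all
qed

lemma classify_vanishing_power_sums:
  fixes F :: "'a \<Rightarrow> 'b \<Rightarrow> real" and S :: "nat \<Rightarrow> nat \<Rightarrow> 'a \<Rightarrow> 'b \<Rightarrow> complex"
  assumes fin: "finite I" and card_I: "card I \<le> 4" and L_sub: "L \<subseteq> I"
    and S_power: "\<And>N n j l. S N n j l = complex_of_real (F j l ^ N) * S 0 n j l"
    and S_outside: "\<And>n j l. (j, l) \<in> I \<Longrightarrow> (j, l) \<notin> L \<Longrightarrow> S 0 n j l = 0"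
    and S_nonvanishing: "\<And>j l. (j, l) \<in> L \<Longrightarrow> \<not> (\<lambda>n. S 0 n j l) \<longlonglongrightarrow> 0"
    and S_sums: "\<And>N. (\<lambda>n. \<Sum>(j, l)\<in>I. S N n j l) \<longlonglongrightarrow> 0"
  shows "card L \<in> {0, 2, 3, 4}
           \<and> (card L \<in> {2, 3} \<longrightarrow> (\<exists>c. \<forall>(j, l)\<in>L. F j l = c))
           \<and> (card L = 4 \<longrightarrow> (\<exists>c. \<forall>(j, l)\<in>L. F j l = c)
              \<or> (\<exists>\<Lambda>1 \<Lambda>2. L = \<Lambda>1 \<union> \<Lambda>2 \<and> card \<Lambda>1 = 2 \<and> card \<Lambda>2 = 2
                   \<and> (\<forall>P\<in>{\<Lambda>1, \<Lambda>2}.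
                        (\<exists>c. \<forall>(j, l)\<in>P. F j l = c)
                        \<and> (\<forall>N. (\<lambda>n. \<Sum>(j, l)\<in>P. S N n j l) \<longlonglongrightarrow> 0))))"
proof -
  define f where "f = (\<lambda>(j, l). F j l)"
  define B where "B = (\<lambda>(j, l) n. S 0 n j l)"
  have sum_eq: "(\<Sum>(j, l)\<in>P. S N n j l) = (\<Sum>i\<in>P. f i ^ N *\<^sub>R B i n)" for P N n
    unfolding f_def B_def by (subst S_power) (simp add: case_prod_unfold scaleR_conv_of_real)
  have finL: "finite L" and card_L: "card L \<le> 4"
    using finite_subset[OF L_sub fin] card_mono[OF fin L_sub] card_I by auto
  have level: "(\<lambda>n. \<Sum>i\<in>{i\<in>L. f i = v}. B i n) \<longlonglongrightarrow> 0" for v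
  proof -
    have "(\<Sum>i\<in>{i\<in>I. f i = v}. B i n) = (\<Sum>i\<in>{i\<in>L. f i = v}. B i n)" for n
      using fin L_sub S_outside by (intro sum.mono_neutral_right) (auto simp: B_def)
    then show ?thesis
      using tendsto_level_sum_zero[OF fin, of f B v] S_sums unfolding sum_eq by simp
  qed
  have partner: "\<exists>i'\<in>L. i' \<noteq> i \<and> f i' = f i" if i: "i \<in> L" for i
  proof (rule ccontr)
    assume "\<not> ?thesis"
    then have "{i'\<in>L. f i' = f i} = {i}"
      using i by auto
    then have "B i \<longlonglongrightarrow> 0"
      using level[of "f i"] by simp
    then show False
      using S_nonvanishing i by (cases i) (simp add: B_def)
  qed
  have level_set_vanishing: "(\<exists>c. \<forall>(j, l)\<in>P. F j l = c) \<and> (\<forall>N. (\<lambda>n. \<Sum>(j, l)\<in>P. S N n j l) \<longlonglongrightarrow> 0)"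
    if P: "P = {i\<in>L. f i = v}" for P v
  proof
    show "\<exists>c. \<forall>(j, l)\<in>P. F j l = c"
      using P by (auto simp: f_def)
    have "(\<Sum>(j, l)\<in>P. S N n j l) = v ^ N *\<^sub>R (\<Sum>i\<in>P. B i n)" for N n
      unfolding sum_eq P by (simp add: scaleR_sum_right)
    moreover have "(\<lambda>n. v ^ N *\<^sub>R (\<Sum>i\<in>P. B i n)) \<longlonglongrightarrow> v ^ N *\<^sub>R 0" for N
      unfolding P by (intro tendsto_intros level)
    ultimately show "\<forall>N. (\<lambda>n. \<Sum>(j, l)\<in>P. S N n j l) \<longlonglongrightarrow> 0"
      by simp
  qed
  have split: "card L = 4 \<and> (\<exists>\<Lambda>1 \<Lambda>2. L = \<Lambda>1 \<union> \<Lambda>2 \<and> card \<Lambda>1 = 2 \<and> card \<Lambda>2 = 2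
                   \<and> (\<forall>P\<in>{\<Lambda>1, \<Lambda>2}. (\<exists>c. \<forall>(j, l)\<in>P. F j l = c)
                        \<and> (\<forall>N. (\<lambda>n. \<Sum>(j, l)\<in>P. S N n j l) \<longlonglongrightarrow> 0)))"
    if non_constant: "\<not> (\<exists>c. \<forall>(j, l)\<in>L. F j l = c)"
  proof -
    have "\<not> (\<exists>c. \<forall>i\<in>L. f i = c)"
      using non_constant unfolding f_def by (simp add: case_prod_unfold)
    then obtain i1 i2 where i12: "i1 \<in> L" "i2 \<in> L" "f i1 \<noteq> f i2"
      by blast
    define A1 where "A1 = {i\<in>L. f i = f i1}"
    define A2 where "A2 = {i\<in>L. f i = f i2}"
    note levels = two_level_sets_of_card_two[OF finL card_L partner i12, folded A1_def A2_def]
    have "\<forall>P\<in>{A1, A2}. (\<exists>c. \<forall>(j, l)\<in>P. F j l = c) \<and> (\<forall>N. (\<lambda>n. \<Sum>(j, l)\<in>P. S N n j l) \<longlonglongrightarrow> 0)"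
      unfolding A1_def A2_def using level_set_vanishing by blast
    with levels show ?thesis
      by blast
  qed
  have "card L \<noteq> 1"
    using partner by (auto simp: card_Suc_eq)
  show ?thesis
  proof (cases "\<exists>c. \<forall>(j, l)\<in>L. F j l = c")
    case True
    then show ?thesis
      using card_L \<open>card L \<noteq> 1\<close> by auto
  next
    case False
    with split show ?thesis
      by simp
  qed
qed

lemma ycurve'_eq:
  assumes rho_d1: "\<And>t. (\<rho> has_real_derivative \<rho>' t) (at t)"
  shows "ycurve' \<rho> = (\<lambda>\<theta>. (\<rho>' \<theta> * cos \<theta> - \<rho> \<theta> * sin \<theta>, \<rho>' \<theta> * sin \<theta> + \<rho> \<theta> * cos \<theta>))"
proof
  fix \<theta>
  have "(ycurve \<rho> has_vector_derivative
          (\<rho>' \<theta> * cos \<theta> - \<rho> \<theta> * sin \<theta>, \<rho>' \<theta> * sin \<theta> + \<rho> \<theta> * cos \<theta>)) (at \<theta>)"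
    unfolding ycurve_def
    by (rule has_vector_derivative_Pair)
      (auto simp flip: has_real_derivative_iff_has_vector_derivative
        intro!: derivative_eq_intros rho_d1)
  then show "ycurve' \<rho> \<theta> = (\<rho>' \<theta> * cos \<theta> - \<rho> \<theta> * sin \<theta>, \<rho>' \<theta> * sin \<theta> + \<rho> \<theta> * cos \<theta>)"
    unfolding ycurve'_def by (rule vector_derivative_at)
qed

lemma ycurve''_eq:
  assumes rho_d1: "\<And>t. (\<rho> has_real_derivative \<rho>' t) (at t)"
    and rho_d2: "\<And>t. (\<rho>' has_real_derivative \<rho>'' t) (at t)"
  shows "ycurve'' \<rho> = (\<lambda>\<theta>. ((\<rho>'' \<theta> - \<rho> \<theta>) * cos \<theta> - 2 * \<rho>' \<theta> * sin \<theta>,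
                             (\<rho>'' \<theta> - \<rho> \<theta>) * sin \<theta> + 2 * \<rho>' \<theta> * cos \<theta>))"
proof
  fix \<theta>
  have "((\<lambda>\<theta>. (\<rho>' \<theta> * cos \<theta> - \<rho> \<theta> * sin \<theta>, \<rho>' \<theta> * sin \<theta> + \<rho> \<theta> * cos \<theta>))
         has_vector_derivative ((\<rho>'' \<theta> - \<rho> \<theta>) * cos \<theta> - 2 * \<rho>' \<theta> * sin \<theta>,
                                (\<rho>'' \<theta> - \<rho> \<theta>) * sin \<theta> + 2 * \<rho>' \<theta> * cos \<theta>)) (at \<theta>)"
    by (rule has_vector_derivative_Pair)
      (auto simp flip: has_real_derivative_iff_has_vector_derivative
        intro!: derivative_eq_intros rho_d1 rho_d2 simp: algebra_simps)
  then show "ycurve'' \<rho> \<theta> = ((\<rho>'' \<theta> - \<rho> \<theta>) * cos \<theta> - 2 * \<rho>' \<theta> * sin \<theta>,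
                               (\<rho>'' \<theta> - \<rho> \<theta>) * sin \<theta> + 2 * \<rho>' \<theta> * cos \<theta>)"
    unfolding ycurve''_def ycurve'_eq[OF rho_d1] by (rule vector_derivative_at)
qed

lemma deriv_ln_eq:
  assumes rho_pos: "\<And>t. \<rho> t > 0"
    and rho_d1: "\<And>t. (\<rho> has_real_derivative \<rho>' t) (at t)"
  shows "deriv (\<lambda>s. ln (\<rho> s)) = (\<lambda>t. \<rho>' t / \<rho> t)"
proof
  fix t
  have "((\<lambda>s. ln (\<rho> s)) has_real_derivative (1 / \<rho> t * \<rho>' t)) (at t)"
    by (rule DERIV_chain2[OF DERIV_ln_divide rho_d1]) (use rho_pos in auto)
  then show "deriv (\<lambda>s. ln (\<rho> s)) t = \<rho>' t / \<rho> t"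
    by (simp add: DERIV_imp_deriv)
qed

lemma log_derivative_has_real_derivative:
  assumes rho_pos: "\<And>t. \<rho> t > 0"
    and rho_d1: "\<And>t. (\<rho> has_real_derivative \<rho>' t) (at t)"
    and rho_d2: "\<And>t. (\<rho>' has_real_derivative \<rho>'' t) (at t)"
  shows "((\<lambda>t. \<rho>' t / \<rho> t) has_real_derivative (\<rho>'' t * \<rho> t - \<rho>' t * \<rho>' t) / (\<rho> t)\<^sup>2) (at t)"
  using DERIV_divide[OF rho_d2 rho_d1, of t] rho_pos[of t]
  by (simp add: power2_eq_square)

lemma log_second_derivative_bound:
  assumes rho_pos: "\<And>t. \<rho> t > 0"
    and rho_d1: "\<And>t. (\<rho> has_real_derivative \<rho>' t) (at t)"
    and rho_d2: "\<And>t. (\<rho>' has_real_derivative \<rho>'' t) (at t)"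
    and convex: "\<And>t. deriv (deriv (\<lambda>s. ln (\<rho> s))) t < b"
  shows "(\<rho>'' t * \<rho> t - \<rho>' t * \<rho>' t) / (\<rho> t)\<^sup>2 < b"
  using convex[of t] DERIV_imp_deriv[OF log_derivative_has_real_derivative[OF assms(1-3)]]
  unfolding deriv_ln_eq[OF rho_pos rho_d1] by simp

lemma hfun_has_real_derivative:
  assumes "q \<ge> 0" "sqrt q * cos s + 1 \<noteq> 0"
  shows "(hfun q has_real_derivative sqrt q * (sqrt q + cos s) / (sqrt q * cos s + 1)\<^sup>2) (at s)"
proof -
  have "(hfun q has_real_derivative
     (sqrt q * cos s * (sqrt q * cos s + 1) - sqrt q * sin s * (- sqrt q * sin s))
       / (sqrt q * cos s + 1)\<^sup>2) (at s)"
    unfolding hfun_def[abs_def] using assms(2)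
    by (auto intro!: derivative_eq_intros simp: power2_eq_square)
  moreover have "sqrt q * cos s * (sqrt q * cos s + 1) - sqrt q * sin s * (- sqrt q * sin s)
      = sqrt q * sqrt q * ((sin s)\<^sup>2 + (cos s)\<^sup>2) + sqrt q * cos s"
    by algebra
  ultimately show ?thesis
    using assms(1) by (simp add: algebra_simps)
qed

lemma mult_add_one_sq_le:
  fixes r c :: real
  assumes "r > 1" "\<bar>c\<bar> \<le> 1"
  shows "(r * c + 1)\<^sup>2 * (r / (1 + r)) \<le> r * (r + c)"
proof -
  have "0 \<le> r\<^sup>2 * (1 + c)"
    using assms by simp
  then have "0 \<le> (1 - c) * (r\<^sup>2 * (1 + c) + r - 1)"
    using assms by (intro mult_nonneg_nonneg) linarith+
  also have "\<dots> = (c + r) * (1 + r) - (r * c + 1)\<^sup>2"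
    by (simp add: algebra_simps power2_eq_square)
  finally have "(r * c + 1)\<^sup>2 * (r / (1 + r)) \<le> (c + r) * (1 + r) * (r / (1 + r))"
    using assms by (intro mult_right_mono) auto
  also have "\<dots> = r * (r + c)"
    using assms by (simp add: field_simps)
  finally show ?thesis .
qed

lemma hfun_derivative_ge:
  assumes q: "q > 1" and D: "sqrt q * cos s + 1 \<noteq> 0"
  shows "sqrt q / (1 + sqrt q) \<le> sqrt q * (sqrt q + cos s) / (sqrt q * cos s + 1)\<^sup>2"
  using mult_add_one_sq_le[of "sqrt q" "cos s"] q D
  by (simp add: pos_le_divide_eq mult.commute)

lemma theta_q_bounds:
  assumes "q > 1"
  shows "0 < theta_q q" "theta_q q < pi" "sqrt q * cos (theta_q q) = 1"
proof -
  have "0 < 1 / sqrt q" "1 / sqrt q < 1"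
    using assms by auto
  then have bounds: "-1 < 1 / sqrt q" "1 / sqrt q < 1"
    by linarith+
  then show "0 < theta_q q" "theta_q q < pi"
    unfolding theta_q_def using arccos_lt_bounded by blast+
  show "sqrt q * cos (theta_q q) = 1"
    unfolding theta_q_def using bounds assms by (simp add: cos_arccos)
qed

lemma hfun_denominator_pos:
  assumes q: "q > 1" and s: "theta_q q - pi < s" "s < pi - theta_q q"
  shows "sqrt q * cos s + 1 > 0"
proof -
  have "cos (pi - theta_q q) < cos \<bar>s\<bar>"
    using s theta_q_bounds[OF q] by (intro cos_monotone_0_pi) auto
  then have "- cos (theta_q q) < cos s"
    by (simp add: cos_diff)
  then have "sqrt q * (- cos (theta_q q)) < sqrt q * cos s"
    using q by (intro mult_strict_left_mono) auto
  then show ?thesis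
    using theta_q_bounds(3)[OF q] by simp
qed

lemma hfun_denominator_neg:
  assumes q: "q > 1" and s: "pi - theta_q q < s" "s < pi + theta_q q"
  shows "sqrt q * cos s + 1 < 0"
proof -
  have "cos (theta_q q) < cos \<bar>s - pi\<bar>"
    using s theta_q_bounds[OF q] by (intro cos_monotone_0_pi) auto
  then have "cos s < - cos (theta_q q)"
    by (simp add: cos_diff)
  then have "sqrt q * cos s < sqrt q * (- cos (theta_q q))"
    using q by (intro mult_strict_left_mono) auto
  then show ?thesis
    using theta_q_bounds(3)[OF q] by simp
qed

lemma shifted_hfun_gap_strict_decreasing:
  fixes g L :: "real \<Rightarrow> real"
  assumes q: "q > 1"
    and g_deriv: "\<And>t. (g has_real_derivative L t) (at t)"
    and L_bound: "\<And>t. L t < sqrt q / (1 + sqrt q)"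
    and D_interior: "\<And>s. lo < s \<Longrightarrow> s < hi \<Longrightarrow> sqrt q * cos s + 1 \<noteq> 0"
    and t: "t1 < t2" "lo < t1 - a" "t2 - a < hi"
  shows "g t2 - hfun q (t2 - a) < g t1 - hfun q (t1 - a)"
proof (rule DERIV_neg_imp_decreasing[OF t(1)])
  fix t assume "t1 \<le> t" "t \<le> t2"
  then have D: "sqrt q * cos (t - a) + 1 \<noteq> 0"
    using t by (intro D_interior) auto
  define h' where "h' = sqrt q * (sqrt q + cos (t - a)) / (sqrt q * cos (t - a) + 1)\<^sup>2"
  have "((\<lambda>t. hfun q (t - a)) has_real_derivative h') (at t)"
    unfolding h'_def using q D
      DERIV_chain2[OF hfun_has_real_derivative DERIV_diff[OF DERIV_ident DERIV_const[of a]]]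
    by simp
  then have "((\<lambda>t. g t - hfun q (t - a)) has_real_derivative L t - h') (at t)"
    by (intro DERIV_diff g_deriv)
  moreover have "L t - h' < 0"
    using L_bound[of t] hfun_derivative_ge[OF q D] unfolding h'_def by linarith
  ultimately show "\<exists>y. ((\<lambda>t. g t - hfun q (t - a)) has_real_derivative y) (at t) \<and> y < 0"
    by blast
qed

lemma ex_eq_shifted_hfun:
  fixes g :: "real \<Rightarrow> real"
  assumes q: "q > 1"
    and g_cont: "continuous_on UNIV g"
    and lo_hi: "lo < hi"
    and D_lo: "sqrt q * cos lo + 1 = 0" and D_hi: "sqrt q * cos hi + 1 = 0"
    and D_interior: "\<And>s. lo < s \<Longrightarrow> s < hi \<Longrightarrow> sqrt q * cos s + 1 \<noteq> 0"
    and sin_sign: "sin lo * sin hi < 0"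
  shows "\<exists>\<theta>. \<theta> - a \<in> {lo<..<hi} \<and> g \<theta> = hfun q (\<theta> - a)"
proof -
  \<comment> \<open>Clearing the denominator of h; at the poles lo, hi of h only the term
      -sqrt q sin s survives.\<close>
  define G where "G s = g (a + s) * (sqrt q * cos s + 1) - sqrt q * sin s" for s
  have G_cont: "continuous_on {lo..hi} G"
    unfolding G_def by (intro continuous_intros continuous_on_compose2[OF g_cont]) auto
  have "G lo * G hi = q * (sin lo * sin hi)"
    using D_lo D_hi q unfolding G_def by (simp add: algebra_simps)
  then have G_sign: "G lo * G hi < 0"
    using sin_sign q by (simp add: mult_pos_neg)
  then consider "G lo \<le> 0" "0 \<le> G hi" | "G hi \<le> 0" "0 \<le> G lo"
    by (fastforce simp: mult_less_0_iff)
  then obtain s where s: "lo \<le> s" "s \<le> hi" "G s = 0"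
    using IVT'[of G lo 0 hi] IVT2'[of G hi 0 lo] lo_hi G_cont by (cases; force)
  moreover have "s \<noteq> lo" "s \<noteq> hi"
    using s G_sign by auto
  ultimately have "lo < s" "s < hi"
    by auto
  with s(3) D_interior[OF this] have "(a + s) - a \<in> {lo<..<hi} \<and> g (a + s) = hfun q ((a + s) - a)"
    unfolding G_def hfun_def by (simp add: field_simps)
  then show ?thesis ..
qed

lemma ex1_eq_shifted_hfun:
  fixes g L :: "real \<Rightarrow> real"
  assumes q: "q > 1"
    and g_deriv: "\<And>t. (g has_real_derivative L t) (at t)"
    and L_bound: "\<And>t. L t < sqrt q / (1 + sqrt q)"
    and lo_hi: "lo < hi"
    and D_lo: "sqrt q * cos lo + 1 = 0" and D_hi: "sqrt q * cos hi + 1 = 0"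
    and D_interior: "\<And>s. lo < s \<Longrightarrow> s < hi \<Longrightarrow> sqrt q * cos s + 1 \<noteq> 0"
    and sin_sign: "sin lo * sin hi < 0"
  shows "\<exists>!\<theta>. \<theta> - a \<in> {lo<..<hi} \<and> g \<theta> = hfun q (\<theta> - a)"
proof -
  have "continuous_on UNIV g"
    using g_deriv by (meson DERIV_isCont continuous_at_imp_continuous_on)
  moreover have "t1 = t2"
    if "t1 - a \<in> {lo<..<hi}" "g t1 = hfun q (t1 - a)" "t2 - a \<in> {lo<..<hi}" "g t2 = hfun q (t2 - a)"
    for t1 t2
    using shifted_hfun_gap_strict_decreasing[where lo = lo and hi = hi and a = a,
        OF q g_deriv L_bound D_interior] that
    by (cases t1 t2 rule: linorder_cases) force+
  ultimately show ?thesis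
    using ex_eq_shifted_hfun[OF q _ lo_hi D_lo D_hi D_interior sin_sign, of g a] by blast
qed

lemma Tmap_window:
  fixes j :: nat
  assumes q: "q > 1"
  obtains lo hi where
    "\<And>s. (if j = 1 then s \<in> {theta_q q - pi <..< pi - theta_q q}
           else s \<in> {pi - theta_q q <..< pi + theta_q q}) \<longleftrightarrow> s \<in> {lo<..<hi}"
    "lo < hi" "sqrt q * cos lo + 1 = 0" "sqrt q * cos hi + 1 = 0"
    "\<And>s. lo < s \<Longrightarrow> s < hi \<Longrightarrow> sqrt q * cos s + 1 \<noteq> 0"
    "sin lo * sin hi < 0"
proof -
  note \<theta> = theta_q_bounds[OF q]
  have "sin (theta_q q) > 0"
    using \<theta> by (intro sin_gt_zero)
  then have sin_sq: "- (sin (theta_q q) * sin (theta_q q)) < 0"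
    by simp
  show thesis
  proof (cases "j = 1")
    case True
    show thesis
      by (rule that[of "theta_q q - pi" "pi - theta_q q"])
        (use True \<theta> sin_sq hfun_denominator_pos[OF q] in \<open>force simp: cos_diff sin_diff\<close>)+
  next
    case False
    show thesis
      by (rule that[of "pi - theta_q q" "pi + theta_q q"])
        (use False \<theta> sin_sq hfun_denominator_neg[OF q] in \<open>force simp: cos_diff cos_add sin_diff sin_add\<close>)+
  qed
qed

lemma Tmap_stationary:
  fixes te :: real and j l :: nat
  assumes q: "q > 1"
    and rho_pos: "\<And>t. \<rho> t > 0"
    and rho_d1: "\<And>t. (\<rho> has_real_derivative \<rho>' t) (at t)"
    and rho_d2: "\<And>t. (\<rho>' has_real_derivative \<rho>'' t) (at t)"
    and convex: "\<And>t. deriv (deriv (\<lambda>s. ln (\<rho> s))) t < sqrt q / (1 + sqrt q)"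
  defines "T \<equiv> Tmap q \<rho> te j l"
  shows "\<rho>' T / \<rho> T = hfun q (T - ang_l te l)" "sqrt q * cos (T - ang_l te l) + 1 \<noteq> 0"
proof -
  obtain lo hi where window:
    "\<And>s. (if j = 1 then s \<in> {theta_q q - pi <..< pi - theta_q q}
           else s \<in> {pi - theta_q q <..< pi + theta_q q}) \<longleftrightarrow> s \<in> {lo<..<hi}"
    and lo_hi: "lo < hi" "sqrt q * cos lo + 1 = 0" "sqrt q * cos hi + 1 = 0"
    and D_interior: "\<And>s. lo < s \<Longrightarrow> s < hi \<Longrightarrow> sqrt q * cos s + 1 \<noteq> 0"
    and sin_sign: "sin lo * sin hi < 0"
    using Tmap_window[OF q] by blast
  have "\<exists>!\<theta>. \<theta> - ang_l te l \<in> {lo<..<hi} \<and> \<rho>' \<theta> / \<rho> \<theta> = hfun q (\<theta> - ang_l te l)"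
    by (rule ex1_eq_shifted_hfun[OF q log_derivative_has_real_derivative[OF rho_pos rho_d1 rho_d2]
          log_second_derivative_bound[OF rho_pos rho_d1 rho_d2 convex] lo_hi D_interior sin_sign])
  then have "T - ang_l te l \<in> {lo<..<hi} \<and> \<rho>' T / \<rho> T = hfun q (T - ang_l te l)"
    unfolding T_def Tmap_def window deriv_ln_eq[OF rho_pos rho_d1] by (rule theI')
  then show "\<rho>' T / \<rho> T = hfun q (T - ang_l te l)" "sqrt q * cos (T - ang_l te l) + 1 \<noteq> 0"
    using D_interior by auto
qed

lemma Psi_eq:
  assumes rho_d1: "\<And>t. (\<rho> has_real_derivative \<rho>' t) (at t)" and l: "l \<in> {1, 2}"
  shows "Psi q \<rho> te T (T + delta2 l * pi) = (if l = 1 then 1 else -1) *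
     (sqrt q * \<rho>' T * sin (T - ang_l te l) + sqrt q * \<rho> T * cos (T - ang_l te l) - \<rho> T)"
proof -
  have "cos T * (cos T * \<rho> T) + sin T * (sin T * \<rho> T) = ((sin T)\<^sup>2 + (cos T)\<^sup>2) * \<rho> T"
    by algebra
  then show ?thesis
    using l unfolding Psi_def ycurve'_eq[OF rho_d1] uvec_def perp_def delta2_def ang_l_def
    by (auto simp: sin_diff cos_diff sin_add cos_add algebra_simps)
qed

lemma detD2psi_eq:
  assumes rho_d1: "\<And>t. (\<rho> has_real_derivative \<rho>' t) (at t)"
    and rho_d2: "\<And>t. (\<rho>' has_real_derivative \<rho>'' t) (at t)" and l: "l \<in> {1, 2}"
  shows "detD2psi q \<rho> te T (T + delta2 l * pi) = - \<rho> T *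
     (sqrt q * (\<rho>'' T - \<rho> T) * cos (T - ang_l te l) - 2 * sqrt q * \<rho>' T * sin (T - ang_l te l)
      + \<rho>'' T)"
proof -
  have pythagoras: "sin T * sin T + cos T * cos T = 1"
    using sin_cos_squared_add[of T] by (simp add: power2_eq_square)
  have "\<forall>l\<in>{1, 2}. detD2psi q \<rho> te T (T + delta2 l * pi) = - \<rho> T *
     (sqrt q * (\<rho>'' T - \<rho> T) * cos (T - ang_l te l) - 2 * sqrt q * \<rho>' T * sin (T - ang_l te l)
      + \<rho>'' T)"
    unfolding detD2psi_def ycurve'_eq[OF rho_d1] ycurve''_eq[OF rho_d1 rho_d2] ycurve_def
      uvec_def perp_def delta2_def ang_l_def
    by (simp add: sin_diff cos_diff sin_add cos_add; intro conjI; use pythagoras in algebra)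
  then show ?thesis
    using l by blast
qed

lemma Psi_factor_nonzero:
  fixes p p1 s q :: real
  assumes q: "q > 1" and p: "p > 0" and stationary: "p1 / p = hfun q s"
    and D: "sqrt q * cos s + 1 \<noteq> 0"
  shows "sqrt q * p1 * sin s + sqrt q * p * cos s - p \<noteq> 0"
proof -
  have p1: "p1 * (sqrt q * cos s + 1) = p * sqrt q * sin s"
    using stationary p D unfolding hfun_def by (simp add: field_simps)
  have "(sqrt q * p1 * sin s + sqrt q * p * cos s - p) * (sqrt q * cos s + 1)
      = p * (sqrt q * sqrt q * ((sin s)\<^sup>2 + (cos s)\<^sup>2) - 1)"
    using p1 by algebra
  also have "\<dots> = p * (q - 1)"
    using q by simp
  finally show ?thesis
    using p q by auto
qed

lemma det_factor_nonzero:
  fixes p p1 p2 s q :: real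
  assumes q: "q > 1" and p: "p > 0" and stationary: "p1 / p = hfun q s"
    and D: "sqrt q * cos s + 1 \<noteq> 0"
    and curvature: "(p2 * p - p1 * p1) / p\<^sup>2 < sqrt q / (1 + sqrt q)"
  shows "sqrt q * (p2 - p) * cos s - 2 * sqrt q * p1 * sin s + p2 \<noteq> 0"
proof -
  define r where "r = sqrt q"
  define D where "D = r * cos s + 1"
  have p1: "p1 * D = p * r * sin s"
    using stationary p D unfolding hfun_def D_def r_def by (simp add: field_simps)
  have identity: "(r * (p2 - p) * cos s - 2 * r * p1 * sin s + p2) * D * p
      = D\<^sup>2 * (p2 * p - p1 * p1) - r * (r + cos s) * p\<^sup>2"
    using p1 sin_cos_squared_add[of s] unfolding D_def by algebra
  have "p2 * p - p1 * p1 < r / (1 + r) * p\<^sup>2"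
    using curvature p unfolding r_def by (simp add: divide_less_eq)
  then have "D\<^sup>2 * (p2 * p - p1 * p1) < D\<^sup>2 * (r / (1 + r) * p\<^sup>2)"
    using D unfolding D_def r_def by (intro mult_strict_left_mono) auto
  also have "\<dots> \<le> r * (r + cos s) * p\<^sup>2"
    using mult_right_mono[OF mult_add_one_sq_le[of r "cos s"], of "p\<^sup>2"] q
    unfolding D_def r_def by (simp add: mult.assoc)
  finally have "(r * (p2 - p) * cos s - 2 * r * p1 * sin s + p2) * D * p < 0"
    unfolding identity by simp
  then show ?thesis
    unfolding r_def by auto
qed

lemma
  fixes te :: real and j l :: nat
  assumes q: "q > 1"
    and rho_pos: "\<And>t. \<rho> t > 0"
    and rho_d1: "\<And>t. (\<rho> has_real_derivative \<rho>' t) (at t)"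
    and rho_d2: "\<And>t. (\<rho>' has_real_derivative \<rho>'' t) (at t)"
    and convex: "\<And>t. deriv (deriv (\<lambda>s. ln (\<rho> s))) t < sqrt q / (1 + sqrt q)"
    and l: "l \<in> {1, 2}"
  defines "T \<equiv> Tmap q \<rho> te j l"
  shows Psi_Tmap_nonzero: "Psi q \<rho> te T (T + delta2 l * pi) \<noteq> 0"
    and detD2psi_Tmap_nonzero: "detD2psi q \<rho> te T (T + delta2 l * pi) \<noteq> 0"
proof -
  note stationary = Tmap_stationary[OF q rho_pos rho_d1 rho_d2 convex, of te j l, folded T_def]
  show "Psi q \<rho> te T (T + delta2 l * pi) \<noteq> 0"
    using Psi_factor_nonzero[OF q rho_pos stationary] unfolding Psi_eq[OF rho_d1 l] by simp
  show "detD2psi q \<rho> te T (T + delta2 l * pi) \<noteq> 0"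
    using det_factor_nonzero[OF q rho_pos stationary
        log_second_derivative_bound[OF rho_pos rho_d1 rho_d2 convex]] rho_pos[of T]
    unfolding detD2psi_eq[OF rho_d1 rho_d2 l] by simp
qed

lemma summand_power:
  "summand q \<rho> \<phi> te N kn j l = complex_of_real (fval q \<rho> te j l ^ N) * summand q \<rho> \<phi> te 0 kn j l"
  unfolding summand_def Let_def by simp

lemma summand_eq_0_outside_Lambda:
  assumes "(j, l) \<in> {1, 2} \<times> {1, 2}" "(j, l) \<notin> Lambda q \<rho> \<phi> te"
  shows "summand q \<rho> \<phi> te N kn j l = 0"
  using assms unfolding Lambda_def summand_def Let_def by auto

lemma norm_summand:
  "norm (summand q \<rho> \<phi> te 0 kn j l) =
     (let T = Tmap q \<rho> te j l; T' = T + delta2 l * pi in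
      norm (\<phi> T') * \<bar>Psi q \<rho> te T T'\<bar> / sqrt \<bar>detD2psi q \<rho> te T T'\<bar>)"
  unfolding summand_def Let_def by (simp add: norm_mult norm_divide)

lemma summand_not_tendsto_zero:
  assumes q: "q > 1"
    and rho_pos: "\<And>t. \<rho> t > 0"
    and rho_d1: "\<And>t. (\<rho> has_real_derivative \<rho>' t) (at t)"
    and rho_d2: "\<And>t. (\<rho>' has_real_derivative \<rho>'' t) (at t)"
    and convex: "\<And>t. deriv (deriv (\<lambda>s. ln (\<rho> s))) t < sqrt q / (1 + sqrt q)"
    and jl: "(j, l) \<in> Lambda q \<rho> \<phi> te"
  shows "\<not> (\<lambda>n. summand q \<rho> \<phi> te 0 (k n) j l) \<longlonglongrightarrow> 0"
proof
  assume "(\<lambda>n. summand q \<rho> \<phi> te 0 (k n) j l) \<longlonglongrightarrow> 0"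
  then have "(\<lambda>n. norm (summand q \<rho> \<phi> te 0 (k n) j l)) \<longlonglongrightarrow> 0"
    by (rule tendsto_norm_zero)
  then have "norm (summand q \<rho> \<phi> te 0 0 j l) = 0"
    unfolding norm_summand by (simp add: LIMSEQ_const_iff)
  moreover have "l \<in> {1, 2}" "\<phi> (Tmap q \<rho> te j l + delta2 l * pi) \<noteq> 0"
    using jl unfolding Lambda_def by auto
  ultimately show False
    using Psi_Tmap_nonzero[OF q rho_pos rho_d1 rho_d2 convex]
      detD2psi_Tmap_nonzero[OF q rho_pos rho_d1 rho_d2 convex]
    unfolding norm_summand Let_def by auto
qed

theorem lemma7:
  fixes q :: real and \<rho> \<rho>' \<rho>'' :: "real \<Rightarrow> real" and \<phi> :: "real \<Rightarrow> complex"
    and k :: "nat \<Rightarrow> real"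
  assumes q: "q > 1"
    and rho_pos: "\<And>t. \<rho> t > 0"
    and rho_per: "\<And>t. \<rho> (t + 2 * pi) = \<rho> t"
    and rho_d1: "\<And>t. (\<rho> has_real_derivative \<rho>' t) (at t)"
    and rho_d2: "\<And>t. (\<rho>' has_real_derivative \<rho>'' t) (at t)"
    and rho_C2: "continuous_on UNIV \<rho>''"
    and convex: "\<And>t. deriv (deriv (\<lambda>s. ln (\<rho> s))) t < sqrt q / (1 + sqrt q)"
    and phi_cont: "continuous_on UNIV \<phi>"
    and phi_per: "\<And>t. \<phi> (t + 2 * pi) = \<phi> t"
    and k_pos: "\<And>n. k n > 0"
    and k_lim: "filterlim k at_top sequentially"
    and vanish: "\<And>te N. (\<lambda>n. \<Sum>(j, l)\<in>{1, 2} \<times> {1, 2}. summand q \<rho> \<phi> te N (k n) j l)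
                          \<longlonglongrightarrow> 0"
  shows "\<forall>te. card (Lambda q \<rho> \<phi> te) \<in> {0, 2, 3, 4}
           \<and> (card (Lambda q \<rho> \<phi> te) \<in> {2, 3} \<longrightarrow>
                (\<exists>c. \<forall>(j, l)\<in>Lambda q \<rho> \<phi> te. fval q \<rho> te j l = c))
           \<and> (card (Lambda q \<rho> \<phi> te) = 4 \<longrightarrow>
                (\<exists>c. \<forall>(j, l)\<in>Lambda q \<rho> \<phi> te. fval q \<rho> te j l = c)
              \<or> (\<exists>\<Lambda>1 \<Lambda>2. Lambda q \<rho> \<phi> te = \<Lambda>1 \<union> \<Lambda>2 \<and> card \<Lambda>1 = 2 \<and> card \<Lambda>2 = 2
                   \<and> (\<forall>P\<in>{\<Lambda>1, \<Lambda>2}.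
                        (\<exists>c. \<forall>(j, l)\<in>P. fval q \<rho> te j l = c)
                        \<and> (\<forall>N. (\<lambda>n. \<Sum>(j, l)\<in>P. summand q \<rho> \<phi> te N (k n) j l) \<longlonglongrightarrow> 0))))"
proof (intro allI classify_vanishing_power_sums[where I = "{1, 2} \<times> {1, 2}"])
  fix te
  show "Lambda q \<rho> \<phi> te \<subseteq> {1, 2} \<times> {1, 2}"
    unfolding Lambda_def by auto
qed (assumption | rule summand_power summand_eq_0_outside_Lambda vanish
    summand_not_tendsto_zero[OF q rho_pos rho_d1 rho_d2 convex] | simp add: card_cartesian_product)+

end
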